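(* Let $(C^\bullet,\partial)$ be a complex of finite-dimensional complex vector spaces of odd length $d=2r-1$ with a chirality operator $\Gamma$, let $\mathcal B=\Gamma\partial+\partial\Gamma$, and let $\mathcal I\subset[0,\infty)$ be an interval. For $j=0,\dots,d$ let $C^j_{\mathcal I}\subset C^j$ be the span of the generalized eigenvectors of the restriction of $\mathcal B^2$ to $C^j$ corresponding to eigenvalues $\lambda$ with $|\lambda|\in\mathcal I$, and let $\partial_{\mathcal I}$ be the restriction of $\partial$ to $C^\bullet_{\mathcal I}$ (which is a subcomplex). If $0\notin\mathcal I$, then the complex $(C^\bullet_{\mathcal I},\partial_{\mathcal I})$ is acyclic.
   Context: A chirality operator is an involution $\Gamma:C^\bullet\to C^\bullet$ with $\Gamma(C^j)=C^{d-j}$ for all $j$. *)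

theory Defs
  imports "HOL-Analysis.Analysis"
begin

text \<open>The total space of the cochain complex is complex^'n (a finite-dimensional
complex vector space with a fixed basis); each basis vector i is homogeneous of
degree deg i.\<close>

definition graded_piece :: "('n::finite \<Rightarrow> nat) \<Rightarrow> nat \<Rightarrow> (complex ^ 'n) set" where
  "graded_piece deg j = {v. \<forall>i. deg i \<noteq> j \<longrightarrow> v $ i = 0}"

definition cspan :: "(complex ^ 'n::finite) set \<Rightarrow> (complex ^ 'n) set" where
  "cspan S = {v. \<exists>F c. finite F \<and> F \<subseteq> S \<and> v = (\<Sum>x\<in>F. c x *s x)}"

definition gen_eigvec :: "complex ^ 'n ^ 'n \<Rightarrow> complex \<Rightarrow> complex ^ 'n \<Rightarrow> bool" where
  "gen_eigvec M lam v \<longleftrightarrow> (\<exists>k. ((\<lambda>x. (M - (\<chi> i j. if i = j then lam else 0)) *v x) ^^ k) v = 0)"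

definition spectral_piece ::
  "('n::finite \<Rightarrow> nat) \<Rightarrow> complex ^ 'n ^ 'n \<Rightarrow> real set \<Rightarrow> nat \<Rightarrow> (complex ^ 'n) set" where
  "spectral_piece deg B I j =
     cspan {v \<in> graded_piece deg j. \<exists>lam. cmod lam \<in> I \<and> gen_eigvec (B ** B) lam v}"

end

theory Submission
  imports Defs
begin

text \<open>
  Put K = G D G. From D^2 = 0 and G^2 = 1 one gets B^2 = K D + D K, where K lowers the degree
  by one, and every polynomial in B^2 commutes with D and K and preserves degrees. Since
  1 - (1 - x/lam)^k is divisible by x, a generalized eigenvector x of B^2 with eigenvalue
  lam \<noteq> 0 equals B^2 S x for a polynomial S in B^2, and these combine into one polynomial R
  with B^2 R v = v on the whole spectral piece. For a cocycle v this gives v = D (K R v), where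
  K R v lies in the spectral piece one degree lower.
\<close>

lemma mat_vector_mult: "mat c *v x = c *s x"
  for x :: "'a::semiring_1^'n::finite"
  by (simp add: vec_eq_iff matrix_vector_mult_def mat_def if_distrib if_distribR
      cong del: if_weak_cong)

lemma mat_matrix_mult_commute: "mat c ** M = M ** mat c"
  for M :: "'a::comm_semiring_1^'n::finite^'n"
  by (simp add: vec_eq_iff matrix_matrix_mult_def mat_def if_distrib if_distribR mult.commute
      cong del: if_weak_cong)

lemma matrix_add_rdistrib: "(A + B) ** C = A ** C + B ** C"
  by (vector matrix_matrix_mult_def sum.distrib distrib_right)

lemma matrix_diff_ldistrib: "A ** (B - C) = A ** B - A ** C"
  for A :: "'a::ring_1^'n::finite^'m"
  by (vector matrix_matrix_mult_def sum_subtractf right_diff_distrib)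

lemma matrix_diff_rdistrib: "(A - B) ** C = A ** C - B ** C"
  for A :: "'a::ring_1^'n::finite^'m"
  by (vector matrix_matrix_mult_def sum_subtractf left_diff_distrib)

lemma cspan_eq_span: "cspan S = vec.span S"
  unfolding cspan_def vec.span_explicit by blast

lemma matrix_vector_mult_comp: "(*v) A \<circ> (*v) B = (*v) (A ** B)"
  by (simp add: fun_eq_iff matrix_vector_mul_assoc)

lemma matrix_mult_commute_mult:
  assumes "X ** M = M ** X" and "Y ** M = M ** Y"
  shows "(X ** Y) ** M = M ** (X ** Y)"
proof -
  have "(X ** Y) ** M = X ** (M ** Y)"
    by (simp only: assms(2) flip: matrix_mul_assoc)
  also have "\<dots> = M ** (X ** Y)"
    by (simp only: assms(1) matrix_mul_assoc)
  finally show ?thesis .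
qed

subsection \<open>Polynomials in a square matrix\<close>

inductive_set matrix_polys :: "'a::comm_ring_1^'n::finite^'n \<Rightarrow> ('a^'n^'n) set" for A
where
  mat: "mat c \<in> matrix_polys A"
| self: "A \<in> matrix_polys A"
| add: "X \<in> matrix_polys A \<Longrightarrow> Y \<in> matrix_polys A \<Longrightarrow> X + Y \<in> matrix_polys A"
| diff: "X \<in> matrix_polys A \<Longrightarrow> Y \<in> matrix_polys A \<Longrightarrow> X - Y \<in> matrix_polys A"
| mult: "X \<in> matrix_polys A \<Longrightarrow> Y \<in> matrix_polys A \<Longrightarrow> X ** Y \<in> matrix_polys A"

lemma zero_in_matrix_polys: "0 \<in> matrix_polys A"
  using matrix_polys.mat[of 0 A] by simp

lemma matrix_polys_commute:
  assumes "M ** A = A ** M" and "X \<in> matrix_polys A"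
  shows "X ** M = M ** X"
  using assms(2)
  by induction (simp_all add: assms(1) mat_matrix_mult_commute matrix_add_ldistrib
      matrix_add_rdistrib matrix_diff_ldistrib matrix_diff_rdistrib matrix_mult_commute_mult)

lemma matrix_polys_mult_commute:
  assumes "X \<in> matrix_polys A" and "Y \<in> matrix_polys A"
  shows "X ** Y = Y ** X"
  by (metis assms matrix_polys.self matrix_polys_commute)

lemma matrix_polys_invariant_subspace:
  fixes A :: "'a::field^'n::finite^'n"
  assumes "vec.subspace V" and "\<forall>v\<in>V. A *v v \<in> V"
    and "X \<in> matrix_polys A" and "v \<in> V"
  shows "X *v v \<in> V"
  using assms(3,4)
proof (induction arbitrary: v)
  case (mat c)
  then show ?case by (simp add: mat_vector_mult assms(1) vec.subspace_scale)
next
  case self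
  then show ?case using assms(2) by blast
next
  case (add X Y)
  then show ?case by (simp add: matrix_vector_mult_add_rdistrib assms(1) vec.subspace_add)
next
  case (diff X Y)
  then show ?case by (simp add: matrix_vector_mult_diff_rdistrib assms(1) vec.subspace_diff)
next
  case (mult X Y)
  then show ?case by (simp flip: matrix_vector_mul_assoc)
qed

lemma id_minus_mult_mult:
  "(mat 1 - A ** R) ** (mat 1 - A ** S) = mat 1 - A ** (R + S - R ** A ** S)"
  for A :: "'a::ring_1^'n::finite^'n"
  by (simp add: matrix_diff_ldistrib matrix_diff_rdistrib matrix_add_ldistrib matrix_mul_assoc)

lemma id_minus_mult_vector_eq_0_iff: "(mat 1 - A ** R) *v x = 0 \<longleftrightarrow> A *v (R *v x) = x"
  for A :: "'a::ring_1^'n::finite^'n"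
  by (auto simp: matrix_vector_mult_diff_rdistrib matrix_vector_mul_assoc)

lemma id_minus_mult_funpow:
  assumes "Y \<in> matrix_polys A"
  shows "\<exists>S\<in>matrix_polys A. (*v) (mat 1 - A ** Y) ^^ k = (*v) (mat 1 - A ** S)"
proof (induction k)
  case 0
  show ?case using zero_in_matrix_polys by (force simp: fun_eq_iff)
next
  case (Suc k)
  then obtain S where "S \<in> matrix_polys A" "(*v) (mat 1 - A ** Y) ^^ k = (*v) (mat 1 - A ** S)"
    by blast
  then show ?case
    using assms
    by (intro bexI[of _ "Y + S - Y ** A ** S"])
      (simp_all add: matrix_vector_mult_comp id_minus_mult_mult matrix_polys.intros)
qed

text \<open>With T = R + S - R A S we have 1 - A T = (1 - A R)(1 - A S), and the factors commute.\<close>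

lemma matrix_polys_inverse_finite:
  assumes "finite F" and "\<forall>x\<in>F. \<exists>S\<in>matrix_polys A. A *v (S *v x) = x"
  shows "\<exists>R\<in>matrix_polys A. \<forall>x\<in>F. A *v (R *v x) = x"
  using assms
proof (induction F rule: finite_induct)
  case empty
  then show ?case using zero_in_matrix_polys by blast
next
  case (insert u F)
  then obtain R S where R: "R \<in> matrix_polys A" "\<forall>x\<in>F. (mat 1 - A ** R) *v x = 0"
    and S: "S \<in> matrix_polys A" "(mat 1 - A ** S) *v u = 0"
    by (auto simp flip: id_minus_mult_vector_eq_0_iff)
  let ?T = "R + S - R ** A ** S"
  have RS: "mat 1 - A ** ?T = (mat 1 - A ** R) ** (mat 1 - A ** S)"
    by (rule id_minus_mult_mult[symmetric])
  also have "\<dots> = (mat 1 - A ** S) ** (mat 1 - A ** R)"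
    using R(1) S(1) by (intro matrix_polys_mult_commute[of _ A]) (simp_all add: matrix_polys.intros)
  finally have SR: "mat 1 - A ** ?T = (mat 1 - A ** S) ** (mat 1 - A ** R)" .
  have "(mat 1 - A ** ?T) *v u = 0"
    using S(2) unfolding RS by (simp flip: matrix_vector_mul_assoc)
  moreover have "(mat 1 - A ** ?T) *v x = 0" if "x \<in> F" for x
    using that R(2) unfolding SR by (simp flip: matrix_vector_mul_assoc)
  moreover have "?T \<in> matrix_polys A"
    using R(1) S(1) by (simp add: matrix_polys.intros)
  ultimately show ?case by (auto simp flip: id_minus_mult_vector_eq_0_iff)
qed

lemma gen_eigvec_iff: "gen_eigvec M lam v \<longleftrightarrow> (\<exists>k. ((*v) (M - mat lam) ^^ k) v = 0)"
  by (simp add: gen_eigvec_def mat_def)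

lemma funpow_scaled_matrix_vector_mult:
  "((\<lambda>y. c *s (M *v y)) ^^ k) x = c ^ k *s (((*v) M) ^^ k) x"
  for M :: "'a::field^'n::finite^'n"
  by (induction k) (simp_all add: vector_scalar_commute vector_smult_assoc)

lemma gen_eigvec_nonzero_inverse:
  fixes A :: "complex^'n::finite^'n"
  assumes "gen_eigvec A lam x" and "lam \<noteq> 0"
  shows "\<exists>S\<in>matrix_polys A. A *v (S *v x) = x"
proof -
  obtain k where k: "((*v) (A - mat lam) ^^ k) x = 0"
    using assms(1) gen_eigvec_iff by blast
  let ?Y = "mat (inverse lam) :: complex^'n^'n"
  obtain S where S: "S \<in> matrix_polys A" "(*v) (mat 1 - A ** ?Y) ^^ k = (*v) (mat 1 - A ** S)"
    using id_minus_mult_funpow[OF matrix_polys.mat] by blast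
  define c where "c = - lam"
  have "(*v) (A - mat lam) = (\<lambda>y. c *s ((mat 1 - A ** ?Y) *v y))"
    using assms(2)
    by (simp add: c_def fun_eq_iff matrix_vector_mult_diff_rdistrib mat_vector_mult
        vector_ssub_ldistrib vector_scalar_commute vector_smult_assoc flip: matrix_vector_mul_assoc)
  then have "c ^ k *s ((mat 1 - A ** S) *v x) = 0"
    using k S(2) by (simp add: funpow_scaled_matrix_vector_mult)
  then have "(mat 1 - A ** S) *v x = 0"
    using assms(2) by (simp add: c_def vec_eq_iff)
  then show ?thesis
    using S(1) id_minus_mult_vector_eq_0_iff by blast
qed

lemma span_nonzero_gen_eigvecs_inverse:
  fixes A :: "complex^'n::finite^'n"
  assumes "v \<in> vec.span {x. \<exists>lam. lam \<noteq> 0 \<and> gen_eigvec A lam x}"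
  shows "\<exists>R\<in>matrix_polys A. A *v (R *v v) = v"
proof -
  obtain F c where F: "finite F" "F \<subseteq> {x. \<exists>lam. lam \<noteq> 0 \<and> gen_eigvec A lam x}"
    and v: "v = (\<Sum>x\<in>F. c x *s x)"
    using assms unfolding vec.span_explicit by blast
  have "\<exists>S\<in>matrix_polys A. A *v (S *v x) = x" if "x \<in> F" for x
    using that F(2) gen_eigvec_nonzero_inverse[of A _ x] by auto
  then obtain R where R: "R \<in> matrix_polys A" "\<forall>x\<in>F. A *v (R *v x) = x"
    using matrix_polys_inverse_finite[OF F(1)] by blast
  have "A *v (R *v v) = (\<Sum>x\<in>F. c x *s (A *v (R *v x)))"
    unfolding v vec.sum vec.scale by simp
  also have "\<dots> = v"
    unfolding v using R(2) by (intro sum.cong) auto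
  finally show ?thesis
    using R(1) by blast
qed

lemma zero_in_graded_piece: "0 \<in> graded_piece deg j"
  by (simp add: graded_piece_def)

lemma subspace_graded_piece: "vec.subspace (graded_piece deg j)"
  unfolding vec.subspace_def graded_piece_def by auto

lemma spectral_piece_subset_graded_piece: "spectral_piece deg B I j \<subseteq> graded_piece deg j"
  unfolding spectral_piece_def cspan_eq_span
  by (rule vec.span_minimal[OF Collect_restrict subspace_graded_piece])

lemma spectral_piece_subset_span_nonzero:
  assumes "0 \<notin> I"
  shows "spectral_piece deg B I j \<subseteq> vec.span {x. \<exists>lam. lam \<noteq> 0 \<and> gen_eigvec (B ** B) lam x}"
  unfolding spectral_piece_def cspan_eq_span
  using assms by (intro vec.span_mono) (clarsimp, metis norm_zero)

lemma funpow_matrix_vector_mult_commute: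
  assumes "M ** N = N ** M"
  shows "((*v) N ^^ k) (M *v v) = M *v (((*v) N ^^ k) v)"
  by (induction k) (simp_all add: matrix_vector_mul_assoc assms)

lemma gen_eigvec_commute:
  fixes A :: "complex^'n::finite^'n"
  assumes "M ** A = A ** M" and "gen_eigvec A lam v"
  shows "gen_eigvec A lam (M *v v)"
proof -
  have "M ** (A - mat lam) = (A - mat lam) ** M"
    by (simp add: matrix_diff_ldistrib matrix_diff_rdistrib assms(1) mat_matrix_mult_commute)
  moreover obtain k where "((*v) (A - mat lam) ^^ k) v = 0"
    using assms(2) gen_eigvec_iff by blast
  ultimately have "((*v) (A - mat lam) ^^ k) (M *v v) = 0"
    by (simp add: funpow_matrix_vector_mult_commute)
  then show ?thesis
    unfolding gen_eigvec_iff by blast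
qed

lemma spectral_piece_map:
  assumes "M ** (B ** B) = (B ** B) ** M"
    and "\<forall>v\<in>graded_piece deg j. M *v v \<in> graded_piece deg j'"
    and "v \<in> spectral_piece deg B I j"
  shows "M *v v \<in> spectral_piece deg B I j'"
proof -
  let ?S = "\<lambda>j. {v \<in> graded_piece deg j. \<exists>lam. cmod lam \<in> I \<and> gen_eigvec (B ** B) lam v}"
  have "(*v) M ` ?S j \<subseteq> ?S j'"
    using assms(1,2) by (auto intro: gen_eigvec_commute)
  then have "(*v) M ` vec.span (?S j) \<subseteq> vec.span (?S j')"
    unfolding vec.span_image[symmetric] by (rule vec.span_mono)
  then show ?thesis
    using assms(3) unfolding spectral_piece_def cspan_eq_span
    by (rule image_subset_iff[THEN iffD1, rule_format])
qed

subsection \<open>The odd signature operator\<close>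

lemma chirality_commutes_odd_signature:
  fixes D G :: "'a::ring_1^'n::finite^'n"
  assumes "G ** G = mat 1"
  shows "G ** (G ** D + D ** G) = (G ** D + D ** G) ** G"
proof -
  have "G ** (G ** D + D ** G) = (G ** G) ** D + G ** D ** G"
    by (simp add: matrix_add_ldistrib matrix_mul_assoc)
  moreover have "(G ** D + D ** G) ** G = G ** D ** G + D ** (G ** G)"
    by (simp add: matrix_add_rdistrib matrix_mul_assoc)
  ultimately show ?thesis
    using assms by (simp add: add.commute)
qed

lemma odd_signature_sq:
  fixes D G :: "'a::ring_1^'n::finite^'n"
  assumes "D ** D = 0" and "G ** G = mat 1"
  shows "(G ** D + D ** G) ** (G ** D + D ** G) = G ** D ** G ** D + D ** (G ** D ** G)"
proof -
  have "(G ** D + D ** G) ** (G ** D + D ** G)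
      = G ** D ** G ** D + G ** (D ** D) ** G + D ** (G ** G) ** D + D ** G ** D ** G"
    by (simp add: matrix_add_ldistrib matrix_add_rdistrib matrix_mul_assoc add.assoc)
  then show ?thesis
    using assms by (simp add: matrix_mul_assoc)
qed

lemma differential_commutes_odd_signature_sq:
  fixes D G :: "'a::ring_1^'n::finite^'n"
  assumes "D ** D = 0" and "G ** G = mat 1"
  shows "D ** ((G ** D + D ** G) ** (G ** D + D ** G))
    = ((G ** D + D ** G) ** (G ** D + D ** G)) ** D"
proof -
  have "D ** (G ** D ** G ** D + D ** (G ** D ** G))
      = D ** G ** D ** G ** D + (D ** D) ** (G ** D ** G)"
    by (simp add: matrix_add_ldistrib matrix_mul_assoc)
  moreover have "(G ** D ** G ** D + D ** (G ** D ** G)) ** D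
      = G ** D ** G ** (D ** D) + D ** G ** D ** G ** D"
    by (simp add: matrix_add_rdistrib matrix_mul_assoc)
  ultimately show ?thesis
    unfolding odd_signature_sq[OF assms] using assms(1) by simp
qed

locale chirality_complex =
  fixes deg :: "'n::finite \<Rightarrow> nat" and d :: nat and D G :: "complex^'n^'n"
  assumes deg_le: "\<forall>i. deg i \<le> d"
    and D_deg: "\<forall>j v. v \<in> graded_piece deg j \<longrightarrow> D *v v \<in> graded_piece deg (j + 1)"
    and D_sq: "D ** D = 0"
    and G_inv: "G ** G = mat 1"
    and G_deg: "\<forall>j v. j \<le> d \<longrightarrow> v \<in> graded_piece deg j \<longrightarrow> G *v v \<in> graded_piece deg (d - j)"
begin

abbreviation B :: "complex^'n^'n" where "B \<equiv> G ** D + D ** G"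

abbreviation K :: "complex^'n^'n" where "K \<equiv> G ** D ** G"

lemma graded_piece_above_top:
  assumes "d < j" and "v \<in> graded_piece deg j"
  shows "v = 0"
  using assms deg_le unfolding graded_piece_def by (simp add: vec_eq_iff) (metis not_le)

lemma G_graded_piece:
  assumes "v \<in> graded_piece deg j"
  shows "G *v v \<in> graded_piece deg (d - j)"
proof (cases "j \<le> d")
  case True
  then show ?thesis using G_deg assms by blast
next
  case False
  then have "v = 0" using graded_piece_above_top[OF _ assms] by simp
  then show ?thesis using zero_in_graded_piece by simp
qed

lemma homotopy_graded_piece_0:
  assumes "v \<in> graded_piece deg 0"
  shows "K *v v = 0"
proof -
  have "D *v (G *v v) \<in> graded_piece deg (d + 1)"
    using D_deg G_graded_piece[OF assms] by simp
  then have "D *v (G *v v) = 0"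
    using graded_piece_above_top[of "d + 1"] by simp
  then show ?thesis
    by (simp flip: matrix_vector_mul_assoc)
qed

lemma homotopy_graded_piece:
  assumes "v \<in> graded_piece deg j"
  shows "K *v v \<in> graded_piece deg (j - 1)"
proof -
  consider "j = 0" | "d < j" | "1 \<le> j" "j \<le> d" by linarith
  then show ?thesis
  proof cases
    case 1
    then show ?thesis using homotopy_graded_piece_0 assms zero_in_graded_piece by simp
  next
    case 2
    then have "v = 0" using graded_piece_above_top assms by simp
    then show ?thesis using zero_in_graded_piece by simp
  next
    case 3
    have "G *v (D *v (G *v v)) \<in> graded_piece deg (d - (d - j + 1))"
      using D_deg G_graded_piece assms by blast
    moreover have "d - (d - j + 1) = j - 1" using 3 by simp
    ultimately show ?thesis by (simp flip: matrix_vector_mul_assoc)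
  qed
qed

lemma odd_signature_sq_graded_piece:
  assumes "v \<in> graded_piece deg j"
  shows "(B ** B) *v v \<in> graded_piece deg j"
proof -
  have "K *v (D *v v) \<in> graded_piece deg j"
    using homotopy_graded_piece D_deg assms by fastforce
  moreover have "D *v (K *v v) \<in> graded_piece deg j"
  proof (cases "j = 0")
    case True
    then show ?thesis using homotopy_graded_piece_0 assms zero_in_graded_piece by simp
  next
    case False
    then show ?thesis using homotopy_graded_piece D_deg assms by fastforce
  qed
  ultimately show ?thesis
    unfolding odd_signature_sq[OF D_sq G_inv]
    by (simp add: matrix_vector_mult_add_rdistrib vec.subspace_add[OF subspace_graded_piece]
        flip: matrix_vector_mul_assoc)
qed

lemma homotopy_commutes_odd_signature_sq: "K ** (B ** B) = (B ** B) ** K"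
proof -
  have "B ** G = G ** B"
    by (rule chirality_commutes_odd_signature[OF G_inv, symmetric])
  then have "G ** (B ** B) = (B ** B) ** G"
    using matrix_mult_commute_mult by metis
  then show ?thesis
    using differential_commutes_odd_signature_sq[OF D_sq G_inv]
    by (intro matrix_mult_commute_mult)
qed

lemma spectral_piece_differential:
  assumes "v \<in> spectral_piece deg B I j"
  shows "D *v v \<in> spectral_piece deg B I (j + 1)"
  by (rule spectral_piece_map[OF differential_commutes_odd_signature_sq[OF D_sq G_inv] _ assms])
    (use D_deg in blast)

lemma spectral_piece_exact:
  assumes "0 \<notin> I" and v: "v \<in> spectral_piece deg B I j" and "D *v v = 0"
  shows "if j = 0 then v = 0 else \<exists>w\<in>spectral_piece deg B I (j - 1). D *v w = v"
proof -
  obtain R where R: "R \<in> matrix_polys (B ** B)" "(B ** B) *v (R *v v) = v"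
    using span_nonzero_gen_eigvecs_inverse spectral_piece_subset_span_nonzero[OF assms(1)] v
    by blast
  have "\<forall>u\<in>graded_piece deg j. R *v u \<in> graded_piece deg j"
    using matrix_polys_invariant_subspace[OF subspace_graded_piece _ R(1)]
      odd_signature_sq_graded_piece by blast
  then have Rv: "R *v v \<in> spectral_piece deg B I j"
    using spectral_piece_map[OF matrix_polys_commute[OF refl R(1)] _ v] by blast
  have "R ** D = D ** R"
    by (rule matrix_polys_commute[OF differential_commutes_odd_signature_sq[OF D_sq G_inv] R(1)])
  then have "D *v (R *v v) = 0"
    using assms(3) by (metis matrix_vector_mul_assoc matrix_vector_mult_0_right)
  then have primitive: "D *v (K *v (R *v v)) = v"
    using R(2) unfolding odd_signature_sq[OF D_sq G_inv]
    by (simp add: matrix_vector_mult_add_rdistrib flip: matrix_vector_mul_assoc)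
  show ?thesis
  proof (cases "j = 0")
    case True
    then have "K *v (R *v v) = 0"
      using homotopy_graded_piece_0 spectral_piece_subset_graded_piece Rv by blast
    then show ?thesis using primitive True by simp
  next
    case False
    have "K *v (R *v v) \<in> spectral_piece deg B I (j - 1)"
      by (rule spectral_piece_map[OF homotopy_commutes_odd_signature_sq _ Rv])
        (use homotopy_graded_piece in blast)
    then show ?thesis using primitive False by auto
  qed
qed

end

theorem lemma5p5:
  fixes deg :: "'n::finite \<Rightarrow> nat"
    and D G :: "complex ^ 'n ^ 'n"
    and d r :: nat
    and I :: "real set"
  assumes odd_len: "r \<ge> 1" "d = 2 * r - 1"
    and deg_le: "\<forall>i. deg i \<le> d"
    and D_deg: "\<forall>j v. v \<in> graded_piece deg j \<longrightarrow> D *v v \<in> graded_piece deg (j + 1)"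
    and D_sq: "D ** D = 0"
    and G_inv: "G ** G = mat 1"
    and G_deg: "\<forall>j v. j \<le> d \<longrightarrow> v \<in> graded_piece deg j \<longrightarrow> G *v v \<in> graded_piece deg (d - j)"
    and I_int: "is_interval I" and I_nonneg: "I \<subseteq> {0..}"
    and zero_notin: "0 \<notin> I"
  shows "(\<forall>j v. v \<in> spectral_piece deg (G ** D + D ** G) I j \<longrightarrow>
             D *v v \<in> spectral_piece deg (G ** D + D ** G) I (j + 1))
       \<and> (\<forall>j \<le> d. \<forall>v \<in> spectral_piece deg (G ** D + D ** G) I j.
             D *v v = 0 \<longrightarrow>
             (if j = 0 then v = 0
              else (\<exists>w \<in> spectral_piece deg (G ** D + D ** G) I (j - 1). D *v w = v)))"
proof -
  interpret chirality_complex deg d D G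
    using deg_le D_deg D_sq G_inv G_deg by unfold_locales
  show ?thesis
    using spectral_piece_differential spectral_piece_exact[OF zero_notin] by blast
qed

end
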